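(* For every $\lambda>0$, the function $\beta\mapsto\tilde\alpha(\beta,\lambda)$ is strictly decreasing on the set $\{\beta>0:\ \lambda+\beta\sqrt{\lambda}\ge 1\}$.
   Context: For $\lambda>0$ and real $n\ge 0$, the continuous Erlang-C function is $\bar\alpha(n,\lambda)=\min\Big\{1,\big[\lambda\int_0^\infty t e^{-\lambda t}(1+t)^{n-1}\,dt\big]^{-1}\Big\}$ (for $n\ge\lambda$ the minimum is attained by the second term; for integer $n>\lambda$ it equals the Erlang-C probability of waiting in an $M/M/n$ queue with arrival rate $\lambda$ and service rate 1). Set $\tilde\alpha(\beta,\lambda)=\bar\alpha(\lambda+\beta\sqrt\lambda,\lambda)$. *)

theory Defs
  imports "HOL-Analysis.Analysis"
begin

text \<open>The integral is the Lebesgue integral over [0, inf) (the integrand is nonnegative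
  and integrable for lam > 0).\<close>
definition alpha_bar :: "real \<Rightarrow> real \<Rightarrow> real" where
  "alpha_bar n lam =
     min 1 (inverse (lam * (LBINT t:{0..}. t * exp (- lam * t) * (1 + t) powr (n - 1))))"

definition alpha_tilde :: "real \<Rightarrow> real \<Rightarrow> real" where
  "alpha_tilde \<beta> lam = alpha_bar (lam + \<beta> * sqrt lam) lam"

end

theory Submission
  imports Defs "HOL-Probability.Sinc_Integral" "HOL-Real_Asymp.Real_Asymp"
begin

text \<open>Write \<open>I(n) = \<integral>\<^sub>0\<^sup>\<infinity> t e\<^sup>-\<^sup>\<lambda>\<^sup>t (1+t)\<^sup>n\<^sup>-\<^sup>1 dt\<close>, so that the Erlang-C function is
  \<open>min 1 (1 / (\<lambda> I(n)))\<close>. The integrand is strictly increasing in \<open>n\<close>, hence so is \<open>I\<close>.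
  At \<open>n = \<lambda>\<close> the integrand is \<open>1/\<lambda>\<close> times the derivative of \<open>-(1+t)\<^sup>\<lambda> e\<^sup>-\<^sup>\<lambda>\<^sup>t\<close>, so
  \<open>\<lambda> I(\<lambda>) = 1\<close>. Therefore \<open>\<lambda> I(n) > 1\<close> for \<open>n > \<lambda>\<close>, the minimum is attained by the
  second term, and \<open>n \<mapsto> 1 / (\<lambda> I(n))\<close> is strictly decreasing on \<open>(\<lambda>, \<infinity>)\<close>. Every
  \<open>\<beta> > 0\<close> gives \<open>n = \<lambda> + \<beta>\<surd>\<lambda> > \<lambda>\<close>.\<close>

definition erlang_integral :: "real \<Rightarrow> real \<Rightarrow> real" where
  "erlang_integral n lam = (LBINT t:{0<..}. t * exp (- lam * t) * (1 + t) powr (n - 1))"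

lemma alpha_bar_eq_erlang_integral:
  "alpha_bar n lam = min 1 (inverse (lam * erlang_integral n lam))"
proof -
  have "(LBINT t:{0..}. t * exp (- lam * t) * (1 + t) powr (n - 1))
      = (LBINT t:{0<..}. t * exp (- lam * t) * (1 + t) powr (n - 1))"
  proof (rule set_integral_cong_set)
    show "AE x in lborel. ((x::real) \<in> {0<..}) = (x \<in> {0..})"
      using AE_lborel_singleton[of 0] by eventually_elim auto
  qed (auto simp: set_borel_measurable_def)
  then show ?thesis
    unfolding alpha_bar_def erlang_integral_def by simp
qed

lemma one_plus_powr_le_exp:
  fixes m \<epsilon> t :: real
  assumes "m > 0" "\<epsilon> > 0" "t \<ge> 0"
  shows "(1 + t) powr m \<le> (m / \<epsilon>) powr m * exp (\<epsilon> - m) * exp (\<epsilon> * t)"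
proof -
  define K where "K = m / \<epsilon>"
  have K: "K > 0" using assms by (simp add: K_def)
  have "ln ((1 + t) / K) \<le> (1 + t) / K - 1"
    using assms K by (intro ln_le_minus_one) auto
  then have "m * ln (1 + t) \<le> m * (ln K + (1 + t) / K - 1)"
    using assms K by (intro mult_left_mono) (auto simp: ln_div)
  also have "\<dots> = m * ln K + (\<epsilon> - m) + \<epsilon> * t"
    using assms by (simp add: K_def field_simps)
  finally have "exp (m * ln (1 + t)) \<le> exp (m * ln K + (\<epsilon> - m) + \<epsilon> * t)"
    by simp
  then show ?thesis
    using assms K by (simp add: powr_def exp_add K_def)
qed

lemma set_integrable_erlang_integrand:
  fixes lam n :: real
  assumes lam: "lam > 0"
  shows "set_integrable lborel {0<..} (\<lambda>t. t * exp (- lam * t) * (1 + t) powr (n - 1))"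
proof -
  define m where "m = \<bar>n\<bar> + 1"
  define C where "C = (m / (lam / 2)) powr m * exp (lam / 2 - m)"
  have m: "m > 0" "n - 1 \<le> m - 1" by (auto simp: m_def)
  show ?thesis
  proof (rule set_integrable_bound[where f = "\<lambda>t. C * exp (- (t * (lam / 2)))"])
    show "set_integrable lborel {0<..} (\<lambda>t. C * exp (- (t * (lam / 2))))"
      using integrable_I0i_exp_mscale[of "lam / 2"] lam by (intro set_integrable_mult_right) auto
    show "set_borel_measurable lborel {0<..} (\<lambda>t. t * exp (- lam * t) * (1 + t) powr (n - 1))"
      unfolding set_borel_measurable_def by measurable
    show "AE t in lborel. t \<in> {0<..} \<longrightarrow>
        norm (t * exp (- lam * t) * (1 + t) powr (n - 1)) \<le> norm (C * exp (- (t * (lam / 2))))"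
    proof (intro AE_I2 impI)
      fix t :: real
      assume "t \<in> {0<..}"
      then have t: "t > 0" by simp
      have "t * (1 + t) powr (n - 1) \<le> (1 + t) * (1 + t) powr (m - 1)"
        using t m by (intro mult_mono powr_mono) auto
      also have "\<dots> = (1 + t) powr m"
        using t by (simp add: powr_mult_base)
      also have "\<dots> \<le> C * exp (lam / 2 * t)"
        using one_plus_powr_le_exp[of m "lam / 2" t] m t lam by (simp add: C_def)
      finally have "exp (- lam * t) * (t * (1 + t) powr (n - 1))
          \<le> exp (- lam * t) * (C * exp (lam / 2 * t))"
        by (intro mult_left_mono) auto
      also have "\<dots> = C * exp (- (t * (lam / 2)))"
        by (simp add: mult_exp_exp field_simps)
      finally show "norm (t * exp (- lam * t) * (1 + t) powr (n - 1))
          \<le> norm (C * exp (- (t * (lam / 2))))"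
        using t by (simp add: C_def mult.assoc mult.left_commute)
    qed
  qed
qed

lemma set_integral_pos:
  fixes f :: "'a \<Rightarrow> real"
  assumes "set_integrable M A f" "A \<in> sets M" "emeasure M A \<noteq> 0"
    and pos: "\<And>x. x \<in> A \<Longrightarrow> f x > 0"
  shows "(LINT x:A|M. f x) > 0"
proof -
  have int: "integrable M (\<lambda>x. indicator A x *\<^sub>R f x)"
    using assms(1) by (simp add: set_integrable_def)
  have nonneg: "AE x in M. 0 \<le> indicator A x *\<^sub>R f x"
    using pos by (intro AE_I2) (auto simp: indicator_def less_imp_le)
  have "(LINT x:A|M. f x) \<noteq> 0"
  proof
    assume "(LINT x:A|M. f x) = 0"
    then have "AE x in M. indicator A x *\<^sub>R f x = 0"
      using integral_nonneg_eq_0_iff_AE[OF int nonneg] by (simp add: set_lebesgue_integral_def)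
    then have "AE x in M. x \<notin> A"
      by eventually_elim (auto simp: indicator_def split: if_splits dest: pos)
    then have "A \<in> null_sets M"
      using assms(2) by (subst AE_iff_null_sets) auto
    with assms(3) show False by auto
  qed
  moreover have "(LINT x:A|M. f x) \<ge> 0"
    using integral_nonneg_AE[OF nonneg] by (simp add: set_lebesgue_integral_def)
  ultimately show ?thesis by simp
qed

lemma erlang_integral_strict_mono:
  assumes lam: "lam > 0" and "n1 < n2"
  shows "erlang_integral n1 lam < erlang_integral n2 lam"
proof -
  let ?g = "\<lambda>n t. t * exp (- lam * t) * (1 + t) powr (n - 1)"
  have "(LBINT t:{0<..}. ?g n2 t - ?g n1 t) > 0"
  proof (rule set_integral_pos)
    show "set_integrable lborel {0<..} (\<lambda>t. ?g n2 t - ?g n1 t)"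
      using set_integrable_erlang_integrand[OF lam, of n2] set_integrable_erlang_integrand[OF lam, of n1]
      by (rule set_integral_diff)
    have "emeasure lborel {0::real<..<1} \<le> emeasure lborel {0::real<..}"
      by (intro emeasure_mono) auto
    then show "emeasure lborel {0::real<..} \<noteq> 0"
      by auto
    fix t :: real
    assume "t \<in> {0<..}"
    then have "(1 + t) powr (n1 - 1) < (1 + t) powr (n2 - 1)" "t > 0"
      using assms by (auto intro: powr_less_mono)
    then show "?g n2 t - ?g n1 t > 0"
      by (simp add: mult.assoc flip: right_diff_distrib)
  qed simp
  then show ?thesis
    using set_integrable_erlang_integrand[OF lam]
    by (simp add: erlang_integral_def set_integral_diff)
qed

lemma erlang_integral_at_lam:
  assumes lam: "lam > 0"
  shows "lam * erlang_integral lam lam = 1"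
proof -
  define F where "F = (\<lambda>t::real. - ((1 + t) powr lam * exp (- lam * t)))"
  define f where "f = (\<lambda>t::real. lam * (t * exp (- lam * t) * (1 + t) powr (lam - 1)))"
  have "(LBINT t=0..\<infinity>. f t) = 0 - (-1)"
  proof (rule interval_integral_FTC_nonneg)
    fix x :: real
    assume "0 < ereal x"
    then have x: "x > 0" by simp
    have "(F has_real_derivative
        - (lam * (1 + x) powr (lam - 1) * exp (- lam * x) + (1 + x) powr lam * (exp (- lam * x) * (- lam))))
        (at x)"
      unfolding F_def using x by (auto intro!: derivative_eq_intros)
    moreover have "(1 + x) powr lam = (1 + x) * (1 + x) powr (lam - 1)"
      using x by (simp add: powr_mult_base)
    ultimately show "(F has_real_derivative f x) (at x)"
      by (simp add: f_def algebra_simps)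
    show "isCont f x"
      unfolding f_def using x by (auto intro!: continuous_intros)
  next
    show "AE x in lborel. 0 < ereal x \<longrightarrow> ereal x < \<infinity> \<longrightarrow> 0 \<le> f x"
      unfolding f_def using lam by (intro AE_I2) auto
    have "isCont F 0"
      unfolding F_def by (intro continuous_intros) auto
    then have "(F \<longlongrightarrow> -1) (at_right 0)"
      by (simp add: F_def isCont_def filterlim_at_split)
    then show "((F \<circ> real_of_ereal) \<longlongrightarrow> -1) (at_right 0)"
      by (simp add: zero_ereal_def ereal_tendsto_simps)
    have "(F \<longlongrightarrow> 0) at_top"
      unfolding F_def using lam by real_asymp
    then show "((F \<circ> real_of_ereal) \<longlongrightarrow> 0) (at_left \<infinity>)"
      by (simp add: ereal_tendsto_simps)
  qed simp
  then show ?thesis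
    by (simp add: interval_lebesgue_integral_0_infty f_def erlang_integral_def set_integral_mult_right)
qed

lemma alpha_bar_strict_antimono:
  assumes lam: "lam > 0"
  shows "strict_antimono_on {lam<..} (\<lambda>n. alpha_bar n lam)"
proof (rule monotone_onI)
  have above_one: "lam * erlang_integral n lam > 1" if "n > lam" for n
  proof -
    have "lam * erlang_integral lam lam < lam * erlang_integral n lam"
      using erlang_integral_strict_mono[OF lam that] lam by simp
    then show ?thesis
      using erlang_integral_at_lam[OF lam] by simp
  qed
  then have alpha_bar_eq: "alpha_bar n lam = inverse (lam * erlang_integral n lam)" if "n > lam" for n
    using that less_imp_inverse_less[OF above_one[OF that]]
    by (simp add: alpha_bar_eq_erlang_integral)
  fix n1 n2
  assume "n1 \<in> {lam<..}" "n2 \<in> {lam<..}" "n1 < n2"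
  moreover have "lam * erlang_integral n1 lam < lam * erlang_integral n2 lam"
    using erlang_integral_strict_mono[OF lam \<open>n1 < n2\<close>] lam by simp
  ultimately show "alpha_bar n2 lam < alpha_bar n1 lam"
    using above_one[of n1] by (simp add: alpha_bar_eq less_imp_inverse_less del: inverse_mult_distrib)
qed

theorem lemma6:
  fixes lam :: real
  assumes "lam > 0"
  shows "strict_antimono_on {\<beta>::real. \<beta> > 0 \<and> lam + \<beta> * sqrt lam \<ge> 1}
           (\<lambda>\<beta>. alpha_tilde \<beta> lam)"
proof (rule monotone_onI)
  fix b1 b2 :: real
  assume "b1 \<in> {\<beta>. \<beta> > 0 \<and> lam + \<beta> * sqrt lam \<ge> 1}" "b2 \<in> {\<beta>. \<beta> > 0 \<and> lam + \<beta> * sqrt lam \<ge> 1}"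
    and "b1 < b2"
  moreover have "sqrt lam > 0"
    using assms by simp
  ultimately have "lam + b1 * sqrt lam \<in> {lam<..}" "lam + b2 * sqrt lam \<in> {lam<..}"
    and "lam + b1 * sqrt lam < lam + b2 * sqrt lam"
    by auto
  then show "alpha_tilde b2 lam < alpha_tilde b1 lam"
    using alpha_bar_strict_antimono[OF assms] by (simp add: alpha_tilde_def monotone_on_def)
qed

end
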